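(* For $n\ge1$ let $T_n:=\frac1n\sum_{k=1}^n d_n(k)^2$. Then $T_n\to3$ almost surely and in $L^1$ as $n\to\infty$.
   Context: Let $(u_j)_{j\ge1}$ be independent random variables with $u_j$ uniform on $\{1,\dots,j\}$. For $n\ge k\ge1$ let $d_n(k):=\#\{j\in\{k,\dots,n-1\}:u_j=k\}$; i.e. $d_n(k)$ is the out-degree of vertex $k$ in the random recursive tree on $\{1,\dots,n\}$ where vertex $j+1$ attaches to vertex $u_j$. *)

theory Defs
  imports "HOL-Probability.Probability"
begin

text \<open>Out-degree of vertex k in the random recursive tree on {1,...,n}, given the
  attachment sequence u: d_n(k) = #{j in {k,...,n-1} : u j = k}.\<close>
definition outdeg :: "(nat \<Rightarrow> nat) \<Rightarrow> nat \<Rightarrow> nat \<Rightarrow> nat" where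
  "outdeg u n k = card {j \<in> {k..<n}. u j = k}"

definition Tstat :: "(nat \<Rightarrow> nat) \<Rightarrow> nat \<Rightarrow> real" where
  "Tstat u n = (1 / real n) * (\<Sum>k = 1..n. (real (outdeg u n k))\<^sup>2)"

end

theory Submission
  imports Defs "HOL-Library.Discrete_Functions" "HOL-Real_Asymp.Real_Asymp"
begin

text \<open>Let S_n = n T_n = sum_k d_n(k)^2. Attaching vertex n + 1 to u_n raises d_n(u_n) by one, so
  S_(n+1) = S_n + 2 d_n(u_n) + 1. As u_n is uniform on {1..n} and independent of the tree on
  {1..n}, averaging over its value and using sum_k d_n(k) = n - 1 gives E S_n = a_n, where
  a_n = sum_(m<n) (3 - 2/m) ~ 3n, and E (S_n - a_n)^2 <= 12 n. By Chebyshev and Borel-Cantelli,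
  S_(m^2) / m^2 tends to 3 almost surely, and monotonicity of S_n fills the gaps between the
  squares. Finally E |S_n - a_n| <= sqrt (12 n) gives convergence in L^1.\<close>

lemma LIMSEQ_div_of_mono_squares:
  fixes S :: "nat \<Rightarrow> real"
  assumes "mono S" and "\<And>n. 0 \<le> S n" and lim: "(\<lambda>m. S (m\<^sup>2) / real (m\<^sup>2)) \<longlonglongrightarrow> L"
  shows "(\<lambda>n. S n / real n) \<longlonglongrightarrow> L"
proof -
  define lower where "lower m = S (m\<^sup>2) / (real m + 1)\<^sup>2" for m
  define upper where "upper m = S ((Suc m)\<^sup>2) / (real m)\<^sup>2" for m
  have "(\<lambda>m. (real m / (real m + 1))\<^sup>2) \<longlonglongrightarrow> 1" "(\<lambda>m. ((real m + 1) / real m)\<^sup>2) \<longlonglongrightarrow> 1"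
    by real_asymp+
  note ratio_lims = tendsto_mult[OF lim this(1)] tendsto_mult[OF LIMSEQ_Suc[OF lim] this(2)]
  have lower_lim: "lower \<longlonglongrightarrow> L"
  proof (rule Lim_transform_eventually)
    show "(\<lambda>m. S (m\<^sup>2) / real (m\<^sup>2) * (real m / (real m + 1))\<^sup>2) \<longlonglongrightarrow> L"
      using ratio_lims(1) by simp
    show "\<forall>\<^sub>F m in sequentially. S (m\<^sup>2) / real (m\<^sup>2) * (real m / (real m + 1))\<^sup>2 = lower m"
      using eventually_ge_at_top[of 1] by eventually_elim (simp add: lower_def power_divide)
  qed
  have upper_lim: "upper \<longlonglongrightarrow> L"
  proof (rule Lim_transform_eventually)
    show "(\<lambda>m. S ((Suc m)\<^sup>2) / real ((Suc m)\<^sup>2) * ((real m + 1) / real m)\<^sup>2) \<longlonglongrightarrow> L"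
      using ratio_lims(2) by simp
    show "\<forall>\<^sub>F m in sequentially.
        S ((Suc m)\<^sup>2) / real ((Suc m)\<^sup>2) * ((real m + 1) / real m)\<^sup>2 = upper m"
      using eventually_ge_at_top[of 1]
      by eventually_elim (simp add: upper_def power_divide field_simps)
  qed
  have sqrt_lim: "filterlim floor_sqrt at_top sequentially"
    unfolding filterlim_at_top eventually_sequentially by (blast intro: le_floor_sqrtI)
  have bounds: "lower (floor_sqrt n) \<le> S n / real n \<and> S n / real n \<le> upper (floor_sqrt n)"
    if "n \<ge> 1" for n
  proof -
    define m where "m = floor_sqrt n"
    have "m\<^sup>2 \<le> n" "n \<le> (Suc m)\<^sup>2" "1 \<le> m"
      using Suc_floor_sqrt_power2_gt[of n] that by (auto simp: m_def Suc_le_eq)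
    then have real_bounds: "(real m)\<^sup>2 \<le> real n" "real n \<le> (real m + 1)\<^sup>2" "1 \<le> real m"
      by (metis of_nat_le_iff of_nat_power, metis of_nat_Suc of_nat_le_iff of_nat_power add.commute,
          simp)
    have "lower m \<le> S (m\<^sup>2) / real n"
      unfolding lower_def using real_bounds that assms(2) by (intro divide_left_mono) auto
    also have "\<dots> \<le> S n / real n"
      using monoD[OF assms(1) \<open>m\<^sup>2 \<le> n\<close>] by (simp add: divide_right_mono)
    finally have "lower m \<le> S n / real n" .
    have "S n / real n \<le> S ((Suc m)\<^sup>2) / real n"
      using monoD[OF assms(1) \<open>n \<le> (Suc m)\<^sup>2\<close>] by (simp add: divide_right_mono)
    also have "\<dots> \<le> upper m"
      unfolding upper_def using real_bounds that assms(2) by (intro divide_left_mono) auto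
    finally show ?thesis
      using \<open>lower m \<le> S n / real n\<close> by (simp add: m_def)
  qed
  show ?thesis
    by (rule tendsto_sandwich[OF _ _ filterlim_compose[OF lower_lim sqrt_lim]
          filterlim_compose[OF upper_lim sqrt_lim]])
       (use bounds in \<open>auto simp: eventually_sequentially\<close>)
qed

lemma (in prob_space) AE_LIMSEQ_0_of_summable_second_moments:
  fixes X :: "nat \<Rightarrow> 'a \<Rightarrow> real"
  assumes [measurable]: "\<And>m. X m \<in> borel_measurable M"
    and integrable: "\<And>m. integrable M (\<lambda>\<omega>. (X m \<omega>)\<^sup>2)"
    and summable: "summable (\<lambda>m. expectation (\<lambda>\<omega>. (X m \<omega>)\<^sup>2))"
  shows "AE \<omega> in M. (\<lambda>m. X m \<omega>) \<longlonglongrightarrow> 0"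
proof -
  have "AE \<omega> in M. eventually (\<lambda>m. \<bar>X m \<omega>\<bar> < e) sequentially" if "e > 0" for e
  proof -
    define A where "A m = {\<omega> \<in> space M. e\<^sup>2 \<le> (X m \<omega>)\<^sup>2}" for m
    have [measurable]: "A m \<in> events" for m
      unfolding A_def by measurable
    have "prob (A m) \<le> expectation (\<lambda>\<omega>. (X m \<omega>)\<^sup>2) / e\<^sup>2" for m
      unfolding A_def using \<open>e > 0\<close> integrable
      by (intro integral_Markov_inequality_measure[where A = "space M"]) auto
    then have "summable (\<lambda>m. prob (A m))"
      by (intro summable_comparison_test'[OF summable_divide[OF summable]]) auto
    then have "AE \<omega> in M. eventually (\<lambda>m. \<omega> \<in> space M - A m) sequentially"
      by (intro borel_cantelli_AE1) (auto simp: emeasure_eq_measure)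
    then show ?thesis
    proof (rule eventually_mono)
      fix \<omega> assume "eventually (\<lambda>m. \<omega> \<in> space M - A m) sequentially"
      then show "eventually (\<lambda>m. \<bar>X m \<omega>\<bar> < e) sequentially"
        by (rule eventually_mono)
           (use \<open>e > 0\<close> in \<open>auto simp: A_def, metis abs_le_square_iff abs_of_pos not_le\<close>)
    qed
  qed
  then have "AE \<omega> in M. \<forall>r::nat. eventually (\<lambda>m. \<bar>X m \<omega>\<bar> < inverse (Suc r)) sequentially"
    by (simp add: AE_all_countable)
  then show ?thesis
  proof (rule eventually_mono)
    fix \<omega> assume small: "\<forall>r::nat. eventually (\<lambda>m. \<bar>X m \<omega>\<bar> < inverse (Suc r)) sequentially"
    show "(\<lambda>m. X m \<omega>) \<longlonglongrightarrow> 0"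
    proof (rule tendstoI)
      fix d :: real assume "d > 0"
      then obtain r where "inverse (Suc r) < d"
        using reals_Archimedean by blast
      show "eventually (\<lambda>m. dist (X m \<omega>) 0 < d) sequentially"
        using small[rule_format, of r] by (rule eventually_mono) (use \<open>inverse (Suc r) < d\<close> in auto)
    qed
  qed
qed

lemma (in prob_space) expectation_abs_le_sqrt:
  fixes X :: "'a \<Rightarrow> real"
  assumes "integrable M X" and "integrable M (\<lambda>\<omega>. (X \<omega>)\<^sup>2)"
  shows "expectation (\<lambda>\<omega>. \<bar>X \<omega>\<bar>) \<le> sqrt (expectation (\<lambda>\<omega>. (X \<omega>)\<^sup>2))"
proof (rule real_le_rsqrt)
  show "(expectation (\<lambda>\<omega>. \<bar>X \<omega>\<bar>))\<^sup>2 \<le> expectation (\<lambda>\<omega>. (X \<omega>)\<^sup>2)"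
    using variance_positive[of "\<lambda>\<omega>. \<bar>X \<omega>\<bar>"] variance_eq[of "\<lambda>\<omega>. \<bar>X \<omega>\<bar>"] assms by simp
qed

lemma borel_measurable_PiM_count_space:
  fixes f :: "('i \<Rightarrow> 'b::countable) \<Rightarrow> 'c::topological_space"
  assumes "finite I"
  shows "f \<in> borel_measurable (PiM I (\<lambda>_. count_space UNIV))"
  using assms by (simp add: count_space_PiM_finite)

lemma sum_sq_shift_average:
  fixes x :: "'a \<Rightarrow> real"
  assumes "finite K" and "card K = n" and "(\<Sum>k\<in>K. x k) = real n * c"
  shows "(\<Sum>k\<in>K. (d + 2 * (x k - c))\<^sup>2) =
    real n * d\<^sup>2 + 4 * (\<Sum>k\<in>K. (x k)\<^sup>2) - 4 * real n * c\<^sup>2"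
proof -
  have "(\<Sum>k\<in>K. (d + 2 * (x k - c))\<^sup>2) =
      (\<Sum>k\<in>K. d\<^sup>2 - 4 * d * c + 4 * c\<^sup>2 + (4 * d - 8 * c) * x k + 4 * (x k)\<^sup>2)"
    by (intro sum.cong) (auto simp: power2_eq_square algebra_simps)
  also have "\<dots> = real n * (d\<^sup>2 - 4 * d * c + 4 * c\<^sup>2) + (4 * d - 8 * c) * (real n * c)
      + 4 * (\<Sum>k\<in>K. (x k)\<^sup>2)"
    using assms by (simp add: sum.distrib sum_distrib_left[symmetric])
  finally show ?thesis
    by (simp add: power2_eq_square algebra_simps)
qed

lemma outdeg_Suc:
  "outdeg u (Suc n) k = outdeg u n k + (if k \<le> n \<and> u n = k then 1 else 0)"
proof -
  have "{j \<in> {k..<Suc n}. u j = k} =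
      {j \<in> {k..<n}. u j = k} \<union> (if k \<le> n \<and> u n = k then {n} else {})"
    by (auto simp: less_Suc_eq)
  then show ?thesis
    unfolding outdeg_def by (auto simp: card_insert_if)
qed

lemma outdeg_eq_0: "n \<le> k \<Longrightarrow> outdeg u n k = 0"
  by (simp add: outdeg_def)

lemma outdeg_le: "outdeg u n k \<le> n"
proof -
  have "outdeg u n k \<le> card {k..<n}"
    unfolding outdeg_def by (rule card_mono) auto
  then show ?thesis by simp
qed

lemma sum_outdeg:
  assumes "\<And>j. j \<in> {1..<n} \<Longrightarrow> u j \<in> {1..j}" and "1 \<le> n"
  shows "(\<Sum>k = 1..n. real (outdeg u n k)) = real n - 1"
  using assms(2)
proof (induction n rule: dec_induct)
  case base
  then show ?case by (simp add: outdeg_eq_0)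
next
  case (step m)
  have "u m \<in> {1..m}"
    using assms(1) step.hyps by auto
  have "(\<Sum>k = 1..Suc m. real (outdeg u (Suc m) k)) = (\<Sum>k = 1..m. real (outdeg u (Suc m) k))"
    by (simp add: outdeg_eq_0)
  also have "\<dots> = (\<Sum>k = 1..m. real (outdeg u m k) + (if u m = k then 1 else 0))"
    by (intro sum.cong) (auto simp: outdeg_Suc)
  also have "\<dots> = real m"
    using step \<open>u m \<in> {1..m}\<close> by (simp add: sum.distrib sum.delta')
  finally show ?case by simp
qed

definition sum_sq_outdeg :: "(nat \<Rightarrow> nat) \<Rightarrow> nat \<Rightarrow> real" where
  "sum_sq_outdeg u n = (\<Sum>k = 1..n. (real (outdeg u n k))\<^sup>2)"

lemma Tstat_eq: "Tstat u n = sum_sq_outdeg u n / real n"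
  by (simp add: Tstat_def sum_sq_outdeg_def)

lemma sum_sq_outdeg_0 [simp]: "sum_sq_outdeg u 0 = 0"
  and sum_sq_outdeg_1 [simp]: "sum_sq_outdeg u (Suc 0) = 0"
  by (simp_all add: sum_sq_outdeg_def outdeg_eq_0)

lemma sum_sq_outdeg_nonneg: "0 \<le> sum_sq_outdeg u n"
  by (simp add: sum_sq_outdeg_def sum_nonneg)

lemma sum_sq_outdeg_Suc:
  assumes "u n \<in> {1..n}"
  shows "sum_sq_outdeg u (Suc n) = sum_sq_outdeg u n + 2 * real (outdeg u n (u n)) + 1"
proof -
  have "sum_sq_outdeg u (Suc n) =
      (\<Sum>k = 1..n. (real (outdeg u n k))\<^sup>2 + (if u n = k then 2 * real (outdeg u n k) + 1 else 0))"
    unfolding sum_sq_outdeg_def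
    by (auto simp: outdeg_eq_0 outdeg_Suc power2_eq_square algebra_simps intro!: sum.cong)
  also have "\<dots> = sum_sq_outdeg u n + 2 * real (outdeg u n (u n)) + 1"
    using assms by (simp add: sum.distrib sum_sq_outdeg_def sum.delta')
  finally show ?thesis .
qed

lemma mono_sum_sq_outdeg:
  assumes "\<And>j. 1 \<le> j \<Longrightarrow> u j \<in> {1..j}"
  shows "mono (sum_sq_outdeg u)"
proof (rule incseq_SucI)
  fix n
  show "sum_sq_outdeg u n \<le> sum_sq_outdeg u (Suc n)"
    using assms[of n] by (cases "n = 0") (simp_all add: sum_sq_outdeg_Suc)
qed

text \<open>Each step adds \<open>2 d\<^sub>m(u\<^sub>m) + 1\<close>, whose mean is \<open>2 (m - 1) / m + 1\<close>.\<close>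
definition sum_sq_mean :: "nat \<Rightarrow> real" where
  "sum_sq_mean n = (\<Sum>m = 1..<n. 3 - 2 / real m)"

lemma sum_sq_mean_Suc: "1 \<le> n \<Longrightarrow> sum_sq_mean (Suc n) = sum_sq_mean n + 3 - 2 / real n"
  by (simp add: sum_sq_mean_def)

lemma sum_sq_mean_le: "sum_sq_mean n \<le> 3 * real n"
proof -
  have "sum_sq_mean n \<le> (\<Sum>m = 1..<n. 3)"
    unfolding sum_sq_mean_def by (intro sum_mono) auto
  then show ?thesis by simp
qed

lemma sum_sq_mean_LIMSEQ: "(\<lambda>n. sum_sq_mean n / real n) \<longlonglongrightarrow> 3"
proof -
  have harm: "sum_sq_mean (Suc n) = 3 * real n - 2 * harm n" for n
  proof (induction n)
    case 0
    then show ?case by (simp add: sum_sq_mean_def harm_def)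
  next
    case (Suc n)
    have "sum_sq_mean (Suc (Suc n)) = sum_sq_mean (Suc n) + 3 - 2 / real (Suc n)"
      by (rule sum_sq_mean_Suc) simp
    then show ?case
      unfolding Suc.IH harm_Suc by (simp add: field_simps)
  qed
  have "(\<lambda>n. (harm n - ln (real n)) * inverse (real (Suc n)) + ln (real n) / real (Suc n))
      \<longlonglongrightarrow> euler_mascheroni * 0 + 0"
    by (intro tendsto_intros euler_mascheroni_LIMSEQ LIMSEQ_inverse_real_of_nat) real_asymp
  then have "(\<lambda>n. harm n / real (Suc n)) \<longlonglongrightarrow> 0"
    by (simp add: divide_inverse algebra_simps)
  moreover have "(\<lambda>n. 3 * real n / real (Suc n)) \<longlonglongrightarrow> 3"
    by real_asymp
  ultimately have "(\<lambda>n. 3 * real n / real (Suc n) - 2 * (harm n / real (Suc n))) \<longlonglongrightarrow> 3 - 2 * 0"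
    by (intro tendsto_intros)
  then have "(\<lambda>n. sum_sq_mean (Suc n) / real (Suc n)) \<longlonglongrightarrow> 3"
    by (simp add: harm diff_divide_distrib)
  then show ?thesis
    by (rule LIMSEQ_imp_Suc)
qed

text \<open>Bounded functions of the tree on \<open>{1..n}\<close>, i.e. of \<open>u 1, \<dots>, u (n - 1)\<close>.\<close>
definition tree_stat :: "nat \<Rightarrow> ((nat \<Rightarrow> nat) \<Rightarrow> real) \<Rightarrow> bool" where
  "tree_stat n h \<longleftrightarrow> (\<forall>u. h (restrict u {1..<n}) = h u) \<and> (\<exists>B. \<forall>u. \<bar>h u\<bar> \<le> B)"

lemma tree_stat_eq:
  assumes "tree_stat n h" and "\<And>j. j \<in> {1..<n} \<Longrightarrow> u j = v j"
  shows "h u = h v"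
proof -
  have "restrict u {1..<n} = restrict v {1..<n}"
    using assms(2) by (auto simp: restrict_def)
  then show ?thesis
    using assms(1) by (metis tree_stat_def)
qed

lemma tree_stat_mono:
  assumes "tree_stat m h" and "m \<le> n"
  shows "tree_stat n h"
proof -
  have "h (restrict u {1..<n}) = h u" for u
    using assms tree_stat_eq[of m h "restrict u {1..<n}" u] by auto
  then show ?thesis
    using assms(1) by (simp add: tree_stat_def)
qed

lemma tree_stat_const: "tree_stat n (\<lambda>_. c)"
  by (auto simp: tree_stat_def)

lemma tree_stat_add:
  assumes "tree_stat n f" and "tree_stat n g"
  shows "tree_stat n (\<lambda>u. f u + g u)"
proof -
  obtain B C where "\<forall>u. \<bar>f u\<bar> \<le> B" "\<forall>u. \<bar>g u\<bar> \<le> C"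
    using assms by (auto simp: tree_stat_def)
  then have "\<forall>u. \<bar>f u + g u\<bar> \<le> B + C"
    by (meson abs_triangle_ineq add_mono order_trans)
  with assms show ?thesis
    unfolding tree_stat_def by auto
qed

lemma tree_stat_diff:
  assumes "tree_stat n f" and "tree_stat n g"
  shows "tree_stat n (\<lambda>u. f u - g u)"
proof -
  obtain B C where "\<forall>u. \<bar>f u\<bar> \<le> B" "\<forall>u. \<bar>g u\<bar> \<le> C"
    using assms by (auto simp: tree_stat_def)
  then have "\<forall>u. \<bar>f u - g u\<bar> \<le> B + C"
    by (meson abs_triangle_ineq4 add_mono order_trans)
  with assms show ?thesis
    unfolding tree_stat_def by auto
qed

lemma tree_stat_mult:
  assumes "tree_stat n f" and "tree_stat n g"
  shows "tree_stat n (\<lambda>u. f u * g u)"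
proof -
  obtain B C where "\<forall>u. \<bar>f u\<bar> \<le> B" "\<forall>u. \<bar>g u\<bar> \<le> C"
    using assms by (auto simp: tree_stat_def)
  then have "\<forall>u. \<bar>f u * g u\<bar> \<le> B * C"
    by (simp add: abs_mult mult_mono')
  with assms show ?thesis
    unfolding tree_stat_def by auto
qed

lemma tree_stat_sum:
  "(\<And>k. k \<in> K \<Longrightarrow> tree_stat n (f k)) \<Longrightarrow> tree_stat n (\<lambda>u. \<Sum>k\<in>K. f k u)"
  by (induction K rule: infinite_finite_induct) (simp_all add: tree_stat_const tree_stat_add)

lemma tree_stat_outdeg:
  assumes "1 \<le> k"
  shows "tree_stat n (\<lambda>u. real (outdeg u n k))"
  unfolding tree_stat_def
proof (intro conjI allI exI)
  fix u :: "nat \<Rightarrow> nat"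
  have "{j \<in> {k..<n}. restrict u {1..<n} j = k} = {j \<in> {k..<n}. u j = k}"
    using assms by auto
  then show "real (outdeg (restrict u {1..<n}) n k) = real (outdeg u n k)"
    by (simp add: outdeg_def)
  show "\<bar>real (outdeg u n k)\<bar> \<le> real n"
    using outdeg_le[of u n k] by simp
qed

lemma tree_stat_sum_sq_outdeg: "tree_stat n (\<lambda>u. sum_sq_outdeg u n)"
  unfolding sum_sq_outdeg_def power2_eq_square
  by (intro tree_stat_sum tree_stat_mult tree_stat_outdeg) simp_all

lemma tree_stat_Tstat: "tree_stat n (\<lambda>u. Tstat u n)"
  unfolding Tstat_eq divide_inverse
  by (intro tree_stat_mult tree_stat_sum_sq_outdeg tree_stat_const)

locale random_recursive_tree = prob_space M for M :: "'a measure" +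
  fixes U :: "nat \<Rightarrow> 'a \<Rightarrow> nat"
  assumes indep_U: "indep_vars (\<lambda>_. count_space UNIV) U {1..}"
    and distr_U: "\<And>j. 1 \<le> j \<Longrightarrow> distr M (count_space UNIV) (U j) = measure_pmf (pmf_of_set {1..j})"
begin

lemma measurable_U: "1 \<le> j \<Longrightarrow> U j \<in> M \<rightarrow>\<^sub>M count_space UNIV"
  using indep_U by (auto simp: indep_vars_def)

lemma borel_measurable_tree_stat:
  assumes "tree_stat n h"
  shows "(\<lambda>\<omega>. h (\<lambda>j. U j \<omega>)) \<in> borel_measurable M"
proof -
  have "(\<lambda>\<omega>. h (\<lambda>j. U j \<omega>)) = h \<circ> (\<lambda>\<omega>. restrict (\<lambda>j. U j \<omega>) {1..<n})"
    using assms by (simp add: tree_stat_def comp_def)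
  also have "\<dots> \<in> borel_measurable M"
    by (intro measurable_comp[OF measurable_restrict borel_measurable_PiM_count_space] measurable_U)
       auto
  finally show ?thesis .
qed

lemma integrable_tree_stat:
  assumes "tree_stat n h"
  shows "integrable M (\<lambda>\<omega>. h (\<lambda>j. U j \<omega>))"
proof -
  obtain B where "\<forall>u. \<bar>h u\<bar> \<le> B"
    using assms by (auto simp: tree_stat_def)
  then show ?thesis
    by (intro integrable_const_bound[where B = B] borel_measurable_tree_stat[OF assms]) auto
qed

text \<open>The event \<open>u\<^sub>j = k\<close> is independent of the tree on \<open>{1..j}\<close>.\<close>
lemma integral_mult_of_bool_U:
  assumes "k \<in> {1..j}" and "tree_stat j h"
  shows "(\<integral>\<omega>. h (\<lambda>i. U i \<omega>) * of_bool (U j \<omega> = k) \<partial>M) = (\<integral>\<omega>. h (\<lambda>i. U i \<omega>) \<partial>M) / real j"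
proof -
  have U_j: "U j \<in> M \<rightarrow>\<^sub>M count_space UNIV"
    using assms(1) by (intro measurable_U) simp
  have "indep_var borel (h \<circ> (\<lambda>\<omega>. restrict (\<lambda>i. U i \<omega>) {1..<j}))
      borel ((\<lambda>x. of_bool (x j = k) :: real) \<circ> (\<lambda>\<omega>. restrict (\<lambda>i. U i \<omega>) {j}))"
    using assms(1)
    by (intro indep_var_compose[OF indep_var_restrict[OF indep_U]] borel_measurable_PiM_count_space)
       auto
  then have indep: "indep_var borel (\<lambda>\<omega>. h (\<lambda>i. U i \<omega>)) borel (\<lambda>\<omega>. of_bool (U j \<omega> = k) :: real)"
    using assms(2) by (simp add: tree_stat_def comp_def)
  have "(\<integral>\<omega>. of_bool (U j \<omega> = k) \<partial>M) = (\<integral>\<omega>. indicator (U j -` {k} \<inter> space M) \<omega> \<partial>M)"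
    by (intro Bochner_Integration.integral_cong) (auto simp: indicator_def)
  also have "\<dots> = measure (distr M (count_space UNIV) (U j)) {k}"
    using U_j by (simp add: measure_distr measurable_sets)
  also have "\<dots> = 1 / real j"
    using assms(1) by (simp add: distr_U measure_pmf_single)
  finally have "(\<integral>\<omega>. of_bool (U j \<omega> = k) \<partial>M) = 1 / real j" .
  moreover have "integrable M (\<lambda>\<omega>. of_bool (U j \<omega> = k) :: real)"
    by (intro integrable_const_bound[where B = 1] measurable_compose[OF U_j]) auto
  ultimately show ?thesis
    using indep_var_lebesgue_integral[OF indep integrable_tree_stat[OF assms(2)]] by simp
qed

lemma AE_U_range: "AE \<omega> in M. \<forall>j\<ge>1. U j \<omega> \<in> {1..j}"
proof -
  have "AE \<omega> in M. U j \<omega> \<in> {1..j}" if "1 \<le> j" for j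
  proof (rule AE_distrD[OF measurable_U[OF that]])
    show "AE x in distr M (count_space UNIV) (U j). x \<in> {1..j}"
      unfolding distr_U[OF that] using that by (simp add: AE_measure_pmf_iff)
  qed
  then show ?thesis
    by (simp add: AE_all_countable)
qed

end

text \<open>With the range condition holding everywhere rather than almost surely, the identities
  for \<open>outdeg\<close> can be used pointwise under the integral; the general case differs from this
  one on a null set.\<close>
locale valid_random_recursive_tree = random_recursive_tree +
  assumes U_range: "\<And>j \<omega>. 1 \<le> j \<Longrightarrow> U j \<omega> \<in> {1..j}"
begin

lemma integral_eval_at_U:
  assumes "1 \<le> m" and g: "\<And>k. k \<in> {1..m} \<Longrightarrow> tree_stat m (g k)"
  shows "(\<integral>\<omega>. g (U m \<omega>) (\<lambda>j. U j \<omega>) \<partial>M) = (\<integral>\<omega>. (\<Sum>k = 1..m. g k (\<lambda>j. U j \<omega>)) / real m \<partial>M)"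
proof -
  have indicator_stat: "tree_stat (Suc m) (\<lambda>u. of_bool (u m = k))" for k
    using assms(1) by (auto simp: tree_stat_def intro!: exI[of _ 1])
  have "(\<integral>\<omega>. g (U m \<omega>) (\<lambda>j. U j \<omega>) \<partial>M) =
      (\<integral>\<omega>. (\<Sum>k = 1..m. g k (\<lambda>j. U j \<omega>) * of_bool (U m \<omega> = k)) \<partial>M)"
  proof (rule Bochner_Integration.integral_cong)
    fix \<omega>
    have "{1..m} \<inter> {k. U m \<omega> = k} = {U m \<omega>}"
      using U_range[OF assms(1)] by auto
    then show "g (U m \<omega>) (\<lambda>j. U j \<omega>) = (\<Sum>k = 1..m. g k (\<lambda>j. U j \<omega>) * of_bool (U m \<omega> = k))"
      by simp
  qed simp
  also have "\<dots> = (\<Sum>k = 1..m. (\<integral>\<omega>. g k (\<lambda>j. U j \<omega>) * of_bool (U m \<omega> = k) \<partial>M))"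
  proof (rule Bochner_Integration.integral_sum)
    fix k assume "k \<in> {1..m}"
    have "tree_stat (Suc m) (g k)"
      using g[OF \<open>k \<in> {1..m}\<close>] by (rule tree_stat_mono) simp
    from tree_stat_mult[OF this indicator_stat]
    show "integrable M (\<lambda>\<omega>. g k (\<lambda>j. U j \<omega>) * of_bool (U m \<omega> = k))"
      by (rule integrable_tree_stat)
  qed
  also have "\<dots> = (\<Sum>k = 1..m. (\<integral>\<omega>. g k (\<lambda>j. U j \<omega>) \<partial>M) / real m)"
    using g by (intro sum.cong integral_mult_of_bool_U) auto
  also have "\<dots> = (\<integral>\<omega>. (\<Sum>k = 1..m. g k (\<lambda>j. U j \<omega>)) \<partial>M) / real m"
    using g by (subst Bochner_Integration.integral_sum)
      (auto intro: integrable_tree_stat simp: sum_divide_distrib)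
  also have "\<dots> = (\<integral>\<omega>. (\<Sum>k = 1..m. g k (\<lambda>j. U j \<omega>)) / real m \<partial>M)"
    by simp
  finally show ?thesis .
qed

lemma sum_outdeg_U: "1 \<le> n \<Longrightarrow> (\<Sum>k = 1..n. real (outdeg (\<lambda>j. U j \<omega>) n k)) = real n - 1"
  using U_range by (intro sum_outdeg) auto

lemma integral_sum_sq_outdeg: "(\<integral>\<omega>. sum_sq_outdeg (\<lambda>j. U j \<omega>) n \<partial>M) = sum_sq_mean n"
proof (induction n)
  case 0
  show ?case by (simp add: sum_sq_mean_def)
next
  case (Suc n)
  show ?case
  proof (cases "n = 0")
    case True
    then show ?thesis by (simp add: sum_sq_mean_def)
  next
    case False
    then have "1 \<le> n" by simp
    let ?S = "\<lambda>\<omega>. sum_sq_outdeg (\<lambda>j. U j \<omega>) n"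
    have "(\<integral>\<omega>. sum_sq_outdeg (\<lambda>j. U j \<omega>) (Suc n) \<partial>M) =
        (\<integral>\<omega>. ?S \<omega> + 2 * real (outdeg (\<lambda>j. U j \<omega>) n (U n \<omega>)) + 1 \<partial>M)"
      using U_range \<open>n \<noteq> 0\<close> by (simp add: sum_sq_outdeg_Suc)
    also have "\<dots> = (\<integral>\<omega>. (\<Sum>k = 1..n. ?S \<omega> + 2 * real (outdeg (\<lambda>j. U j \<omega>) n k) + 1) / real n \<partial>M)"
      using \<open>n \<noteq> 0\<close>
      by (intro integral_eval_at_U[where g = "\<lambda>k u. sum_sq_outdeg u n + 2 * real (outdeg u n k) + 1"]
          tree_stat_add tree_stat_mult tree_stat_const tree_stat_sum_sq_outdeg tree_stat_outdeg)
         auto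
    also have "\<dots> = (\<integral>\<omega>. ?S \<omega> + 3 - 2 / real n \<partial>M)"
    proof (rule Bochner_Integration.integral_cong)
      fix \<omega>
      have "(\<Sum>k = 1..n. ?S \<omega> + 2 * real (outdeg (\<lambda>j. U j \<omega>) n k) + 1) =
          real n * ?S \<omega> + 2 * (\<Sum>k = 1..n. real (outdeg (\<lambda>j. U j \<omega>) n k)) + real n"
        by (simp add: sum.distrib sum_distrib_left)
      then show "(\<Sum>k = 1..n. ?S \<omega> + 2 * real (outdeg (\<lambda>j. U j \<omega>) n k) + 1) / real n =
          ?S \<omega> + 3 - 2 / real n"
        unfolding sum_outdeg_U[OF \<open>1 \<le> n\<close>] using \<open>n \<noteq> 0\<close> by (simp add: field_simps)
    qed simp
    also have "\<dots> = sum_sq_mean (Suc n)"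
      using Suc.IH \<open>n \<noteq> 0\<close> integrable_tree_stat[OF tree_stat_sum_sq_outdeg]
      by (simp add: sum_sq_mean_Suc prob_space)
    finally show ?thesis .
  qed
qed

lemma integral_sum_sq_outdeg_deviation:
  "(\<integral>\<omega>. (sum_sq_outdeg (\<lambda>j. U j \<omega>) n - sum_sq_mean n)\<^sup>2 \<partial>M) \<le> 12 * real n"
proof (induction n)
  case 0
  show ?case by (simp add: sum_sq_mean_def)
next
  case (Suc n)
  show ?case
  proof (cases "n = 0")
    case True
    then show ?thesis by (simp add: sum_sq_mean_def)
  next
    case False
    then have "1 \<le> n" by simp
    define c where "c = (real n - 1) / real n"
    let ?D = "\<lambda>u. sum_sq_outdeg u n - sum_sq_mean n"
    have D_stat: "tree_stat n ?D"
      by (intro tree_stat_diff tree_stat_sum_sq_outdeg tree_stat_const)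
    have "(\<integral>\<omega>. (sum_sq_outdeg (\<lambda>j. U j \<omega>) (Suc n) - sum_sq_mean (Suc n))\<^sup>2 \<partial>M) =
        (\<integral>\<omega>. (?D (\<lambda>j. U j \<omega>) + 2 * (real (outdeg (\<lambda>j. U j \<omega>) n (U n \<omega>)) - c))\<^sup>2 \<partial>M)"
      using U_range \<open>1 \<le> n\<close>
      by (intro Bochner_Integration.integral_cong)
         (simp_all add: sum_sq_outdeg_Suc sum_sq_mean_Suc c_def diff_divide_distrib algebra_simps)
    also have "\<dots> = (\<integral>\<omega>. (\<Sum>k = 1..n. (?D (\<lambda>j. U j \<omega>) + 2 * (real (outdeg (\<lambda>j. U j \<omega>) n k) - c))\<^sup>2)
        / real n \<partial>M)"
      using \<open>1 \<le> n\<close> D_stat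
      by (intro integral_eval_at_U[where g = "\<lambda>k u. (?D u + 2 * (real (outdeg u n k) - c))\<^sup>2"])
         (auto simp: power2_eq_square intro!: tree_stat_add tree_stat_mult tree_stat_diff
           tree_stat_const tree_stat_outdeg)
    also have "\<dots> = (\<integral>\<omega>. (?D (\<lambda>j. U j \<omega>))\<^sup>2 + 4 * (sum_sq_outdeg (\<lambda>j. U j \<omega>) n / real n)
        - 4 * c\<^sup>2 \<partial>M)"
    proof (rule Bochner_Integration.integral_cong)
      fix \<omega>
      have "(\<Sum>k = 1..n. real (outdeg (\<lambda>j. U j \<omega>) n k)) = real n * c"
        unfolding sum_outdeg_U[OF \<open>1 \<le> n\<close>] using \<open>1 \<le> n\<close> by (simp add: c_def)
      from sum_sq_shift_average[OF _ _ this, of "?D (\<lambda>j. U j \<omega>)"]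
      show "(\<Sum>k = 1..n. (?D (\<lambda>j. U j \<omega>) + 2 * (real (outdeg (\<lambda>j. U j \<omega>) n k) - c))\<^sup>2) / real n =
          (?D (\<lambda>j. U j \<omega>))\<^sup>2 + 4 * (sum_sq_outdeg (\<lambda>j. U j \<omega>) n / real n) - 4 * c\<^sup>2"
        using \<open>1 \<le> n\<close> by (simp add: sum_sq_outdeg_def field_simps)
    qed simp
    also have "\<dots> = (\<integral>\<omega>. (?D (\<lambda>j. U j \<omega>))\<^sup>2 \<partial>M) + 4 * (sum_sq_mean n / real n) - 4 * c\<^sup>2"
      using integrable_tree_stat[OF tree_stat_mult[OF D_stat D_stat]]
        integrable_tree_stat[OF tree_stat_sum_sq_outdeg]
      by (simp add: integral_sum_sq_outdeg power2_eq_square prob_space)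
    also have "\<dots> \<le> 12 * real n + 4 * 3"
    proof -
      have "sum_sq_mean n / real n \<le> 3"
        using sum_sq_mean_le[of n] \<open>1 \<le> n\<close> by (simp add: divide_le_eq)
      then show ?thesis
        using Suc.IH zero_le_power2[of c] by linarith
    qed
    finally show ?thesis by simp
  qed
qed

lemma AE_Tstat_LIMSEQ: "AE \<omega> in M. (\<lambda>n. Tstat (\<lambda>j. U j \<omega>) n) \<longlonglongrightarrow> 3"
proof -
  define X where "X m \<omega> = (sum_sq_outdeg (\<lambda>j. U j \<omega>) (m\<^sup>2) - sum_sq_mean (m\<^sup>2)) / real (m\<^sup>2)"
    for m \<omega>
  have X_stat:
    "tree_stat (m\<^sup>2) (\<lambda>u. (sum_sq_outdeg u (m\<^sup>2) - sum_sq_mean (m\<^sup>2)) / real (m\<^sup>2))" for m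
    unfolding divide_inverse
    by (intro tree_stat_mult tree_stat_diff tree_stat_sum_sq_outdeg tree_stat_const)
  have "AE \<omega> in M. (\<lambda>m. X m \<omega>) \<longlonglongrightarrow> 0"
  proof (rule AE_LIMSEQ_0_of_summable_second_moments)
    show "X m \<in> borel_measurable M" for m
      unfolding X_def by (rule borel_measurable_tree_stat[OF X_stat])
    show "integrable M (\<lambda>\<omega>. (X m \<omega>)\<^sup>2)" for m
      using integrable_tree_stat[OF tree_stat_mult[OF X_stat X_stat]]
      by (simp add: X_def power2_eq_square)
    have "expectation (\<lambda>\<omega>. (X m \<omega>)\<^sup>2) \<le> 12 * inverse (real m ^ 2)" for m
    proof -
      have "expectation (\<lambda>\<omega>. (X m \<omega>)\<^sup>2) =
          (\<integral>\<omega>. (sum_sq_outdeg (\<lambda>j. U j \<omega>) (m\<^sup>2) - sum_sq_mean (m\<^sup>2))\<^sup>2 \<partial>M) / (real m ^ 2)\<^sup>2"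
        by (simp add: X_def power_divide)
      also have "\<dots> \<le> 12 * real (m\<^sup>2) / (real m ^ 2)\<^sup>2"
        by (intro divide_right_mono integral_sum_sq_outdeg_deviation) simp
      also have "\<dots> = 12 * inverse (real m ^ 2)"
        by (simp add: power2_eq_square field_simps)
      finally show ?thesis .
    qed
    then show "summable (\<lambda>m. expectation (\<lambda>\<omega>. (X m \<omega>)\<^sup>2))"
      by (intro summable_comparison_test'[OF summable_mult[OF inverse_power_summable[of 2]]])
         (auto simp: integral_nonneg_AE)
  qed
  then show ?thesis
  proof (rule eventually_mono)
    fix \<omega> assume "(\<lambda>m. X m \<omega>) \<longlonglongrightarrow> 0"
    moreover have "(\<lambda>m. sum_sq_mean (m\<^sup>2) / real (m\<^sup>2)) \<longlonglongrightarrow> 3"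
      by (rule filterlim_compose[OF sum_sq_mean_LIMSEQ filterlim_subseq])
         (auto intro!: strict_monoI power_strict_mono)
    ultimately have "(\<lambda>m. sum_sq_mean (m\<^sup>2) / real (m\<^sup>2) + X m \<omega>) \<longlonglongrightarrow> 3 + 0"
      by (intro tendsto_add)
    then have "(\<lambda>m. sum_sq_outdeg (\<lambda>j. U j \<omega>) (m\<^sup>2) / real (m\<^sup>2)) \<longlonglongrightarrow> 3"
      by (simp add: X_def diff_divide_distrib)
    then have "(\<lambda>n. sum_sq_outdeg (\<lambda>j. U j \<omega>) n / real n) \<longlonglongrightarrow> 3"
      using U_range by (intro LIMSEQ_div_of_mono_squares mono_sum_sq_outdeg sum_sq_outdeg_nonneg)
    then show "(\<lambda>n. Tstat (\<lambda>j. U j \<omega>) n) \<longlonglongrightarrow> 3"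
      by (simp add: Tstat_eq)
  qed
qed

lemma Tstat_L1_LIMSEQ: "(\<lambda>n. \<integral>\<omega>. \<bar>Tstat (\<lambda>j. U j \<omega>) n - 3\<bar> \<partial>M) \<longlonglongrightarrow> 0"
proof (rule tendsto_sandwich[where f = "\<lambda>_. 0"])
  show "eventually (\<lambda>n. 0 \<le> (\<integral>\<omega>. \<bar>Tstat (\<lambda>j. U j \<omega>) n - 3\<bar> \<partial>M)) sequentially"
    by (simp add: integral_nonneg_AE)
  have "(\<lambda>n. \<bar>sum_sq_mean n / real n - 3\<bar> + sqrt (12 * real n) / real n) \<longlonglongrightarrow> \<bar>3 - 3\<bar> + 0"
    by (intro tendsto_add tendsto_rabs tendsto_diff sum_sq_mean_LIMSEQ tendsto_const) real_asymp
  then show "(\<lambda>n. \<bar>sum_sq_mean n / real n - 3\<bar> + sqrt (12 * real n) / real n) \<longlonglongrightarrow> 0"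
    by simp
  show "eventually (\<lambda>n. (\<integral>\<omega>. \<bar>Tstat (\<lambda>j. U j \<omega>) n - 3\<bar> \<partial>M) \<le>
      \<bar>sum_sq_mean n / real n - 3\<bar> + sqrt (12 * real n) / real n) sequentially"
  proof (rule eventually_sequentiallyI)
    fix n :: nat assume "1 \<le> n"
    let ?D = "\<lambda>\<omega>. sum_sq_outdeg (\<lambda>j. U j \<omega>) n - sum_sq_mean n"
    have D_stat: "tree_stat n (\<lambda>u. sum_sq_outdeg u n - sum_sq_mean n)"
      by (intro tree_stat_diff tree_stat_sum_sq_outdeg tree_stat_const)
    note D_int =
      integrable_tree_stat[OF D_stat] integrable_tree_stat[OF tree_stat_mult[OF D_stat D_stat]]
    have "(\<integral>\<omega>. \<bar>Tstat (\<lambda>j. U j \<omega>) n - 3\<bar> \<partial>M) \<le>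
        (\<integral>\<omega>. \<bar>sum_sq_mean n / real n - 3\<bar> + \<bar>?D \<omega>\<bar> / real n \<partial>M)"
    proof (rule integral_mono)
      show "integrable M (\<lambda>\<omega>. \<bar>Tstat (\<lambda>j. U j \<omega>) n - 3\<bar>)"
        by (intro integrable_abs Bochner_Integration.integrable_diff integrable_const
            integrable_tree_stat[OF tree_stat_Tstat])
      show "integrable M (\<lambda>\<omega>. \<bar>sum_sq_mean n / real n - 3\<bar> + \<bar>?D \<omega>\<bar> / real n)"
        using D_int
        by (intro Bochner_Integration.integrable_add integrable_divide integrable_abs) auto
      fix \<omega>
      have "Tstat (\<lambda>j. U j \<omega>) n - 3 = (sum_sq_mean n / real n - 3) + ?D \<omega> / real n"
        by (simp add: Tstat_eq diff_divide_distrib)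
      then show "\<bar>Tstat (\<lambda>j. U j \<omega>) n - 3\<bar> \<le> \<bar>sum_sq_mean n / real n - 3\<bar> + \<bar>?D \<omega>\<bar> / real n"
        using abs_triangle_ineq[of "sum_sq_mean n / real n - 3" "?D \<omega> / real n"]
        by (simp only: abs_divide abs_of_nat)
    qed
    also have "\<dots> = \<bar>sum_sq_mean n / real n - 3\<bar> + (\<integral>\<omega>. \<bar>?D \<omega>\<bar> \<partial>M) / real n"
      using D_int by (simp add: prob_space)
    also have "\<dots> \<le> \<bar>sum_sq_mean n / real n - 3\<bar> + sqrt (12 * real n) / real n"
    proof -
      have "(\<integral>\<omega>. \<bar>?D \<omega>\<bar> \<partial>M) \<le> sqrt (\<integral>\<omega>. (?D \<omega>)\<^sup>2 \<partial>M)"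
        using D_int by (intro expectation_abs_le_sqrt) (auto simp: power2_eq_square)
      also have "\<dots> \<le> sqrt (12 * real n)"
        by (intro real_sqrt_le_mono integral_sum_sq_outdeg_deviation)
      finally show ?thesis
        by (simp add: divide_right_mono)
    qed
    finally show "(\<integral>\<omega>. \<bar>Tstat (\<lambda>j. U j \<omega>) n - 3\<bar> \<partial>M) \<le>
        \<bar>sum_sq_mean n / real n - 3\<bar> + sqrt (12 * real n) / real n" .
  qed
qed simp

end

lemma (in random_recursive_tree) valid_random_recursive_tree_modification:
  "valid_random_recursive_tree M (\<lambda>j \<omega>. if U j \<omega> \<in> {1..j} then U j \<omega> else 1)"
proof unfold_locales
  show "indep_vars (\<lambda>_. count_space UNIV) (\<lambda>j \<omega>. if U j \<omega> \<in> {1..j} then U j \<omega> else 1) {1..}"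
    using indep_vars_compose2[OF indep_U,
        of "\<lambda>j x. if x \<in> {1..j} then x else 1" "\<lambda>_. count_space UNIV"]
    by simp
  fix j :: nat assume "1 \<le> j"
  have "distr M (count_space UNIV) (\<lambda>\<omega>. if U j \<omega> \<in> {1..j} then U j \<omega> else 1) =
      distr M (count_space UNIV) (U j)"
  proof (rule distr_cong_AE)
    show "AE \<omega> in M. (if U j \<omega> \<in> {1..j} then U j \<omega> else 1) = U j \<omega>"
      using AE_U_range by eventually_elim (use \<open>1 \<le> j\<close> in auto)
    show "(\<lambda>\<omega>. if U j \<omega> \<in> {1..j} then U j \<omega> else 1) \<in> M \<rightarrow>\<^sub>M count_space UNIV"
      using measurable_compose[OF measurable_U[OF \<open>1 \<le> j\<close>], of "\<lambda>x. if x \<in> {1..j} then x else 1"]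
      by simp
  qed (use measurable_U \<open>1 \<le> j\<close> in simp_all)
  then show "distr M (count_space UNIV) (\<lambda>\<omega>. if U j \<omega> \<in> {1..j} then U j \<omega> else 1) =
      measure_pmf (pmf_of_set {1..j})"
    using distr_U[OF \<open>1 \<le> j\<close>] by simp
qed auto

theorem lemma2p4:
  fixes M :: "'a measure" and U :: "nat \<Rightarrow> 'a \<Rightarrow> nat"
  assumes "prob_space M"
    and "prob_space.indep_vars M (\<lambda>_. count_space UNIV) U {1..}"
    and "\<And>j. j \<ge> 1 \<Longrightarrow> distr M (count_space UNIV) (U j) = measure_pmf (pmf_of_set {1..j})"
  shows "(AE \<omega> in M. (\<lambda>n. Tstat (\<lambda>j. U j \<omega>) n) \<longlonglongrightarrow> 3)
    \<and> (\<forall>n. integrable M (\<lambda>\<omega>. Tstat (\<lambda>j. U j \<omega>) n))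
    \<and> ((\<lambda>n. LINT \<omega>|M. \<bar>Tstat (\<lambda>j. U j \<omega>) n - 3\<bar>) \<longlonglongrightarrow> 0)"
proof -
  interpret random_recursive_tree M U
    using assms by (simp add: random_recursive_tree_def random_recursive_tree_axioms_def)
  define V where "V j \<omega> = (if U j \<omega> \<in> {1..j} then U j \<omega> else 1)" for j \<omega>
  interpret V: valid_random_recursive_tree M V
    unfolding V_def by (rule valid_random_recursive_tree_modification)
  have integrable: "integrable M (\<lambda>\<omega>. Tstat (\<lambda>j. U j \<omega>) n)" for n
    by (rule integrable_tree_stat[OF tree_stat_Tstat])
  have UV: "AE \<omega> in M. \<forall>n. Tstat (\<lambda>j. U j \<omega>) n = Tstat (\<lambda>j. V j \<omega>) n"
    using AE_U_range by eventually_elim (auto simp: V_def intro!: tree_stat_eq[OF tree_stat_Tstat])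
  have "(LINT \<omega>|M. \<bar>Tstat (\<lambda>j. U j \<omega>) n - 3\<bar>) = (LINT \<omega>|M. \<bar>Tstat (\<lambda>j. V j \<omega>) n - 3\<bar>)" for n
    using UV integrable[of n] V.integrable_tree_stat[OF tree_stat_Tstat, of n]
    by (intro integral_cong_AE) (auto elim: eventually_mono)
  moreover have "AE \<omega> in M. (\<lambda>n. Tstat (\<lambda>j. U j \<omega>) n) \<longlonglongrightarrow> 3"
    using UV V.AE_Tstat_LIMSEQ by eventually_elim simp
  ultimately show ?thesis
    using integrable V.Tstat_L1_LIMSEQ by simp
qed

end
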